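(* Let $R$ be a commutative domain, $I,J\subseteq R$ two non-zero ideals such that $IJ$ can be generated by $3$ elements, and $\mathfrak m\subseteq R$ a maximal ideal. Then at least one of the following occurs: (1) there exists a non-zero $x\in I_{\mathfrak m}$ such that $(IJ)_{\mathfrak m}/xJ_{\mathfrak m}$ is a cyclic $R_{\mathfrak m}$-module generated by the class of an element of the form $ij$ with $i\in I_{\mathfrak m}$, $j\in J_{\mathfrak m}$; (2) there exists a non-zero $y\in J_{\mathfrak m}$ such that $(IJ)_{\mathfrak m}/yI_{\mathfrak m}$ is a cyclic $R_{\mathfrak m}$-module generated by the class of an element of the form $ij$ with $i\in I_{\mathfrak m}$, $j\in J_{\mathfrak m}$. In particular, if (1) holds (with generator the class of $ij$) then the $R_{\mathfrak m}$-module morphism $I_{\mathfrak m}/xR_{\mathfrak m}\to (IJ)_{\mathfrak m}/xJ_{\mathfrak m}$ induced by multiplication by $j$ is surjective; and if (2) holds (with generator the class of $ij$) then the $R_{\mathfrak m}$-module morphism $J_{\mathfrak m}/yR_{\mathfrak m}\to (IJ)_{\mathfrak m}/yI_{\mathfrak m}$ induced by multiplication by $i$ is surjective.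
   Context: $R_{\mathfrak m}$, $I_{\mathfrak m}$, $J_{\mathfrak m}$, $(IJ)_{\mathfrak m}$ denote localizations at $\mathfrak m$. *)

theory Defs
  imports "HOL-Computational_Algebra.Fraction_Field"
begin

definition is_ideal :: "'a::comm_ring_1 set \<Rightarrow> bool" where
  "is_ideal I \<longleftrightarrow> 0 \<in> I \<and> (\<forall>a\<in>I. \<forall>b\<in>I. a + b \<in> I) \<and> (\<forall>r. \<forall>a\<in>I. r * a \<in> I)"

definition maximal_ideal :: "'a::comm_ring_1 set \<Rightarrow> bool" where
  "maximal_ideal m \<longleftrightarrow> is_ideal m \<and> m \<noteq> UNIV \<and>
     (\<forall>K. is_ideal K \<and> m \<subseteq> K \<longrightarrow> K = m \<or> K = UNIV)"

definition ideal_prod :: "'a::comm_ring_1 set \<Rightarrow> 'a set \<Rightarrow> 'a set" where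
  "ideal_prod I J = {(\<Sum>k<n. f k * g k) | (n::nat) (f::nat \<Rightarrow> 'a) g. \<forall>k<n. f k \<in> I \<and> g k \<in> J}"

definition generated_by_3 :: "'a::comm_ring_1 set \<Rightarrow> bool" where
  "generated_by_3 K \<longleftrightarrow> (\<exists>a b c. K = {r * a + s * b + t * c | (r::'a) s t. True})"

text \<open>Localization at a prime/maximal ideal m of a domain, realised inside the
  fraction field: S_m = { a/s | a \<in> S, s \<notin> m }.  R_m is localize m UNIV.\<close>
definition localize :: "'a::idom set \<Rightarrow> 'a set \<Rightarrow> 'a fract set" where
  "localize m S = {Fract a s | a s. a \<in> S \<and> s \<notin> m}"

end

theory Submission
  imports Defs "HOL.Hull" "HOL-Library.Set_Algebras"
begin

text \<open>
  Localising at \<open>m\<close> gives a local ring \<open>R\<^sub>m\<close> with maximal ideal \<open>n = m R\<^sub>m\<close>, in which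
  \<open>K = (IJ)\<^sub>m\<close> is generated by three elements. So \<open>K / nK\<close> has dimension at most 3 over the
  residue field, and by Nakayama's lemma a submodule \<open>S\<close> with \<open>K \<subseteq> S + nK\<close> contains \<open>K\<close>.
  If some \<open>x \<in> I\<^sub>m\<close> has two products \<open>x j\<^sub>1, x j\<^sub>2\<close> independent modulo \<open>nK\<close>, then either
  \<open>K \<subseteq> x J\<^sub>m + nK\<close>, whence \<open>K = x J\<^sub>m\<close>, or a further product \<open>i j\<close> completes them to a basis
  of \<open>K / nK\<close>, whence \<open>K = R\<^sub>m (i j) + x J\<^sub>m\<close>; symmetrically for some \<open>y \<in> J\<^sub>m\<close>.
  Otherwise multiplication by a single element of \<open>I\<^sub>m\<close> or \<open>J\<^sub>m\<close> has rank at most one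
  modulo \<open>nK\<close>, and polarising with \<open>i\<^sub>1 + i\<^sub>2\<close> shows that all products lie on one line
  \<open>R\<^sub>m (i\<^sub>1 j\<^sub>1) + nK\<close>. Then \<open>K = R\<^sub>m (i\<^sub>1 j\<^sub>1)\<close> by Nakayama, and (1) holds with any non-zero
  \<open>x\<close>. The surjectivity claims follow from \<open>r (i j) + x z - (r i) j = x z\<close>.
\<close>

section \<open>Nakayama and exchange over a local ring\<close>

locale local_subring =
  fixes A n :: "'b::field set"
  assumes zero_mem [simp]: "0 \<in> A" and one_mem [simp]: "1 \<in> A"
    and add_mem: "x \<in> A \<Longrightarrow> y \<in> A \<Longrightarrow> x + y \<in> A"
    and mult_mem: "x \<in> A \<Longrightarrow> y \<in> A \<Longrightarrow> x * y \<in> A"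
    and uminus_mem: "x \<in> A \<Longrightarrow> - x \<in> A"
    and max_subset: "n \<subseteq> A"
    and max_zero [simp]: "0 \<in> n"
    and max_add: "x \<in> n \<Longrightarrow> y \<in> n \<Longrightarrow> x + y \<in> n"
    and max_mult: "r \<in> A \<Longrightarrow> x \<in> n \<Longrightarrow> r * x \<in> n"
    and one_not_max [simp]: "1 \<notin> n"
    and inverse_mem: "x \<in> A \<Longrightarrow> x \<notin> n \<Longrightarrow> inverse x \<in> A"
begin

definition submodule :: "'b set \<Rightarrow> bool" where
  "submodule S \<longleftrightarrow> 0 \<in> S \<and> (\<forall>u\<in>S. \<forall>v\<in>S. u + v \<in> S) \<and> (\<forall>r\<in>A. \<forall>u\<in>S. r * u \<in> S)"

lemma submoduleI:
  assumes "0 \<in> S" "\<And>u v. u \<in> S \<Longrightarrow> v \<in> S \<Longrightarrow> u + v \<in> S"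
    and "\<And>r u. r \<in> A \<Longrightarrow> u \<in> S \<Longrightarrow> r * u \<in> S"
  shows "submodule S"
  using assms unfolding submodule_def by blast

lemma
  assumes "submodule S"
  shows submodule_zero: "0 \<in> S"
    and submodule_add: "u \<in> S \<Longrightarrow> v \<in> S \<Longrightarrow> u + v \<in> S"
    and submodule_mult: "r \<in> A \<Longrightarrow> u \<in> S \<Longrightarrow> r * u \<in> S"
  using assms unfolding submodule_def by blast+

lemma submodule_uminus: "submodule S \<Longrightarrow> u \<in> S \<Longrightarrow> - u \<in> S"
  using submodule_mult[of S "- 1" u] uminus_mem[OF one_mem] by simp

lemma submodule_diff: "submodule S \<Longrightarrow> u \<in> S \<Longrightarrow> v \<in> S \<Longrightarrow> u - v \<in> S"
  using submodule_add submodule_uminus by (metis diff_conv_add_uminus)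

lemma submodule_ring: "submodule A"
  by (rule submoduleI) (auto intro: add_mem mult_mem)

lemma submodule_max_ideal: "submodule n"
  by (rule submoduleI) (auto intro: max_add max_mult)

lemma submodule_elt_times:
  assumes C: "submodule C"
  shows "submodule (g *o C)"
proof (rule submoduleI)
  show "0 \<in> g *o C" using set_times_intro2[OF submodule_zero[OF C], of g] by simp
next
  fix u v assume "u \<in> g *o C" "v \<in> g *o C"
  then obtain c d where "c \<in> C" "d \<in> C" "u = g * c" "v = g * d"
    by (auto simp: elt_set_times_def)
  then show "u + v \<in> g *o C"
    using set_times_intro2[OF submodule_add[OF C], of c d g] by (simp add: distrib_left)
next
  fix r u assume "r \<in> A" "u \<in> g *o C"
  then obtain c where "c \<in> C" "u = g * c" by (auto simp: elt_set_times_def)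
  then show "r * u \<in> g *o C"
    using set_times_intro2[OF submodule_mult[OF C \<open>r \<in> A\<close>], of c g]
    by (simp add: mult.left_commute)
qed

lemma submodule_set_plus:
  assumes S: "submodule S" and T: "submodule T"
  shows "submodule (S + T)"
proof (rule submoduleI)
  show "0 \<in> S + T" using set_plus_intro[OF submodule_zero[OF S] submodule_zero[OF T]] by simp
next
  fix u v assume "u \<in> S + T" "v \<in> S + T"
  then obtain s t s' t' where "s \<in> S" "t \<in> T" "s' \<in> S" "t' \<in> T" "u = s + t" "v = s' + t'"
    by (auto elim!: set_plus_elim)
  then show "u + v \<in> S + T"
    using set_plus_intro[OF submodule_add[OF S] submodule_add[OF T], of s s' t t']
    by (simp add: ac_simps)
next
  fix r u assume r: "r \<in> A" and "u \<in> S + T"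
  then obtain s t where "s \<in> S" "t \<in> T" "u = s + t" by (auto elim!: set_plus_elim)
  then show "r * u \<in> S + T"
    using set_plus_intro[OF submodule_mult[OF S r] submodule_mult[OF T r], of s t]
    by (simp add: distrib_left)
qed

lemma set_plus_subset_submodule: "submodule T \<Longrightarrow> X \<subseteq> T \<Longrightarrow> Y \<subseteq> T \<Longrightarrow> X + Y \<subseteq> T"
  by (auto elim!: set_plus_elim intro: submodule_add)

lemma submodule_hull [simp]: "submodule (submodule hull X)"
  by (rule hull_in) (simp add: submodule_def)

lemma submodule_hull_empty [simp]: "submodule hull {} = {0}"
proof (rule hull_unique)
  show "submodule {0}" by (rule submoduleI) auto
qed (auto intro: submodule_zero)

lemma submodule_hull_insert: "submodule hull (insert g G) = g *o A + submodule hull G"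
proof (rule hull_unique)
  show "insert g G \<subseteq> g *o A + submodule hull G"
  proof
    fix x assume "x \<in> insert g G"
    then show "x \<in> g *o A + submodule hull G"
    proof
      assume "x = g"
      have "g * 1 + 0 \<in> g *o A + submodule hull G"
        by (intro set_plus_intro set_times_intro2 one_mem submodule_zero[OF submodule_hull])
      then show ?thesis using \<open>x = g\<close> by simp
    next
      assume "x \<in> G"
      have "g * 0 + x \<in> g *o A + submodule hull G"
        by (intro set_plus_intro set_times_intro2 zero_mem hull_inc \<open>x \<in> G\<close>)
      then show ?thesis by simp
    qed
  qed
  show "submodule (g *o A + submodule hull G)"
    by (intro submodule_set_plus submodule_elt_times submodule_ring submodule_hull)
next
  fix T assume T: "insert g G \<subseteq> T" "submodule T"
  have "g *o A \<subseteq> T" using T submodule_mult[OF T(2)]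
    by (auto simp: elt_set_times_def mult.commute)
  moreover have "submodule hull G \<subseteq> T" using T by (intro hull_minimal) auto
  ultimately show "g *o A + submodule hull G \<subseteq> T" by (rule set_plus_subset_submodule[OF T(2)])
qed

lemma submodule_hull_singleton [simp]: "submodule hull {g} = g *o A"
  by (simp add: submodule_hull_insert)

lemma subset_elt_times_plus: "X \<subseteq> p *o A + X"
  using set_times_intro2[OF zero_mem, of p] by (intro set_zero_plus2) simp

abbreviation rad :: "'b set \<Rightarrow> 'b set" where
  "rad K \<equiv> submodule hull (n * K)"

lemma mem_rad: "v \<in> n \<Longrightarrow> k \<in> K \<Longrightarrow> v * k \<in> rad K"
  by (intro hull_inc set_times_intro)

lemma rad_mono: "K \<subseteq> L \<Longrightarrow> rad K \<subseteq> rad L"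
  by (intro hull_mono set_times_mono2) auto

lemma rad_subset: "submodule S \<Longrightarrow> rad S \<subseteq> S"
  using max_subset by (intro hull_minimal) (auto elim!: set_times_elim intro: submodule_mult)

lemma rad_set_plus: "rad (S + T) \<subseteq> rad S + rad T"
proof (rule hull_minimal)
  show "n * (S + T) \<subseteq> rad S + rad T"
    by (auto elim!: set_times_elim set_plus_elim simp: distrib_left intro!: mem_rad)
qed (intro submodule_set_plus submodule_hull)

lemma rad_elt_times: "rad (g *o A) \<subseteq> g *o n"
proof (rule hull_minimal)
  show "n * (g *o A) \<subseteq> g *o n"
  proof
    fix x assume "x \<in> n * (g *o A)"
    then obtain v r where "v \<in> n" "r \<in> A" "x = v * (g * r)"
      by (auto elim!: set_times_elim simp: elt_set_times_def)
    then show "x \<in> g *o n"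
      using set_times_intro2[OF max_mult[of r v], of g] by (simp add: ac_simps)
  qed
qed (intro submodule_elt_times submodule_max_ideal)

lemma add_mem_set_plus_rad: "t \<in> rad K \<Longrightarrow> w \<in> X + rad K \<Longrightarrow> t + w \<in> X + rad K"
  by (auto elim!: set_plus_elim simp: add.left_commute intro!: submodule_add[OF submodule_hull])

lemma one_minus_max: "v \<in> n \<Longrightarrow> 1 - v \<in> A \<and> 1 - v \<notin> n"
proof
  assume v: "v \<in> n"
  then show "1 - v \<in> A"
    using max_subset by (metis add_mem diff_conv_add_uminus one_mem subsetD uminus_mem)
  show "1 - v \<notin> n"
  proof
    assume "1 - v \<in> n"
    then have "(1 - v) + v \<in> n" using max_add v by blast
    then show False by simp
  qed
qed

lemma mem_submodule_if_mem_plus_max_multiple: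
  assumes S: "submodule S" and g: "g \<in> S + g *o n"
  shows "g \<in> S"
proof -
  obtain s v where s: "s \<in> S" and v: "v \<in> n" and "g = s + g * v"
    using g by (auto elim!: set_plus_elim simp: elt_set_times_def)
  then have "(1 - v) * g = s" by (simp add: algebra_simps)
  moreover have "1 - v \<noteq> 0" using one_minus_max[OF v] by auto
  ultimately have "g = inverse (1 - v) * s" by (simp add: field_simps)
  then show ?thesis
    using submodule_mult[OF S _ s] inverse_mem one_minus_max[OF v] by simp
qed

lemma nakayama_cyclic:
  assumes S: "submodule S" and g: "g \<in> K"
    and KS: "K \<subseteq> S + g *o A" and K_rad: "K \<subseteq> S + rad K"
  shows "K \<subseteq> S"
proof -
  have "rad K \<subseteq> rad S + rad (g *o A)"
    using rad_mono[OF KS] rad_set_plus[of S "g *o A"] by blast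
  also have "\<dots> \<subseteq> S + g *o n"
    using rad_subset[OF S] rad_elt_times[of g] by (rule set_plus_mono2)
  finally have rad_K: "rad K \<subseteq> S + g *o n" .
  have "g \<in> S + rad K" using g K_rad by blast
  also have "\<dots> \<subseteq> S + (S + g *o n)" by (rule set_plus_mono2[OF order_refl rad_K])
  also have "\<dots> = (S + S) + g *o n" by (simp add: add.assoc)
  also have "\<dots> \<subseteq> S + g *o n"
    using set_plus_subset_submodule[OF S, of S S] by (intro set_plus_mono2) auto
  finally have "g \<in> S" by (rule mem_submodule_if_mem_plus_max_multiple[OF S])
  then have "g *o A \<subseteq> S"
    using submodule_mult[OF S] by (auto simp: elt_set_times_def mult.commute)
  then show ?thesis using KS set_plus_subset_submodule[OF S, of S "g *o A"] by blast
qed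

theorem nakayama:
  assumes "finite G" and "submodule S"
    and "submodule hull G \<subseteq> S + rad (submodule hull G)"
  shows "submodule hull G \<subseteq> S"
  using assms
proof (induction G arbitrary: S rule: finite_induct)
  case empty
  then show ?case by (simp add: submodule_zero)
next
  case (insert g G)
  let ?K = "submodule hull (insert g G)" and ?K' = "submodule hull G"
  have K: "?K = g *o A + ?K'" by (rule submodule_hull_insert)
  have S: "submodule S" and S': "submodule (S + g *o A)"
    using insert.prems(1) submodule_set_plus submodule_elt_times submodule_ring by blast+
  have "?K' \<subseteq> ?K" by (intro hull_mono) auto
  also have "\<dots> \<subseteq> S + rad ?K" by (fact insert.prems(2))
  also have "\<dots> \<subseteq> S + (g *o n + rad ?K')"
    unfolding K using rad_set_plus set_plus_mono2[OF rad_elt_times order_refl]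
    by (intro set_plus_mono2[OF order_refl]) (rule order_trans)
  also have "\<dots> \<subseteq> (S + g *o A) + rad ?K'"
    using set_times_mono[OF max_subset] by (simp add: add.assoc set_plus_mono2)
  finally have K': "?K' \<subseteq> S + g *o A" using insert.IH[OF S'] by blast
  have "g *o A \<subseteq> S + g *o A" by (rule set_zero_plus2[OF submodule_zero[OF S]])
  then have "?K \<subseteq> S + g *o A" unfolding K using K' by (rule set_plus_subset_submodule[OF S'])
  then show ?case using nakayama_cyclic[OF S hull_inc] insert.prems(2) by blast
qed

lemma submodule_hull_insert_exchange:
  assumes s: "s \<in> A" "s \<notin> n" and w: "w \<in> submodule hull X"
  shows "submodule hull (insert (g * s + w) X) = submodule hull (insert g X)"
proof (rule antisym; rule hull_minimal)
  have "g * s \<in> submodule hull (insert g X)"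
    using submodule_mult[OF submodule_hull s(1), of g] hull_inc[of g] by (simp add: mult.commute)
  moreover have "w \<in> submodule hull (insert g X)" using w hull_mono[of X "insert g X"] by blast
  ultimately show "insert (g * s + w) X \<subseteq> submodule hull (insert g X)"
    using hull_subset[of "insert g X"] by (auto intro: submodule_add[OF submodule_hull])
next
  let ?H = "submodule hull (insert (g * s + w) X)"
  have "s \<noteq> 0" using s by auto
  then have "g = inverse s * ((g * s + w) - w)" by (simp add: field_simps)
  moreover have "(g * s + w) - w \<in> ?H"
    using hull_inc[of "g * s + w"] w hull_mono[of X "insert (g * s + w) X"]
    by (intro submodule_diff[OF submodule_hull]) auto
  ultimately have "g \<in> ?H" using submodule_mult[OF submodule_hull inverse_mem[OF s]] by metis
  then show "insert g X \<subseteq> ?H" using hull_subset[of "insert (g * s + w) X"] by blast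
qed simp_all

lemma exists_unit_coefficient:
  assumes "finite G" and "G \<subseteq> K" and "u \<in> submodule hull (U \<union> G)"
    and "u \<notin> submodule hull U + rad K"
  shows "\<exists>g\<in>G. \<exists>s\<in>A - n. \<exists>w\<in>submodule hull (U \<union> (G - {g})). u = g * s + w"
  using assms
proof (induction G arbitrary: u rule: finite_induct)
  case empty
  have "u \<in> submodule hull U" using empty.prems(2) by simp
  then have "u + 0 \<in> submodule hull U + rad K"
    by (rule set_plus_intro[OF _ submodule_zero[OF submodule_hull]])
  then show ?case using empty.prems(3) by simp
next
  case (insert g G)
  have "u \<in> g *o A + submodule hull (U \<union> G)"
    using insert.prems(2) submodule_hull_insert[of g "U \<union> G"] by simp
  then obtain r w where r: "r \<in> A" and w: "w \<in> submodule hull (U \<union> G)" and u: "u = g * r + w"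
    by (auto elim!: set_plus_elim simp: elt_set_times_def)
  show ?case
  proof (cases "r \<in> n")
    case False
    have "insert g G - {g} = G" using insert.hyps(2) by simp
    then have "w \<in> submodule hull (U \<union> (insert g G - {g}))" using w by simp
    then show ?thesis using r False u by blast
  next
    case True
    have gr: "g * r \<in> rad K" using mem_rad[OF True, of g K] insert.prems(1) by (simp add: mult.commute)
    have "w \<notin> submodule hull U + rad K"
      using add_mem_set_plus_rad[OF gr] insert.prems(3) u by blast
    then obtain g' s w' where g': "g' \<in> G" and s: "s \<in> A - n"
      and w': "w' \<in> submodule hull (U \<union> (G - {g'}))" and w_eq: "w = g' * s + w'"
      using insert.IH[OF _ w] insert.prems(1) by blast
    have "g * r + w' \<in> submodule hull (U \<union> (insert g G - {g'}))"
    proof (rule submodule_add[OF submodule_hull])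
      have "g \<in> U \<union> (insert g G - {g'})" using g' insert.hyps(2) by auto
      then show "g * r \<in> submodule hull (U \<union> (insert g G - {g'}))"
        using submodule_mult[OF submodule_hull r hull_inc] by (simp add: mult.commute)
      show "w' \<in> submodule hull (U \<union> (insert g G - {g'}))"
        using w' hull_mono[of "U \<union> (G - {g'})" "U \<union> (insert g G - {g'})"] by blast
    qed
    moreover have "u = g' * s + (g * r + w')" using u w_eq by (simp add: ac_simps)
    ultimately show ?thesis using g' s by blast
  qed
qed

lemma exchange:
  assumes "finite G" and "G \<subseteq> K" and "u \<in> submodule hull (U \<union> G)"
    and "u \<notin> submodule hull U + rad K"
  obtains g where "g \<in> G"
    and "submodule hull (U \<union> G) = submodule hull (insert u (U \<union> (G - {g})))"
proof -
  obtain g s w where g: "g \<in> G" and s: "s \<in> A" "s \<notin> n"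
    and w: "w \<in> submodule hull (U \<union> (G - {g}))" and u: "u = g * s + w"
    using exists_unit_coefficient[OF assms] by blast
  have "insert g (U \<union> (G - {g})) = U \<union> G" using g by blast
  then have "submodule hull (U \<union> G) = submodule hull (insert u (U \<union> (G - {g})))"
    unfolding u submodule_hull_insert_exchange[OF s w] by simp
  then show ?thesis by (rule that[OF g])
qed

text \<open>For \<open>U = {}\<close> and \<open>N = rad K\<close> this is linear independence
  of the images in \<open>K / rad K\<close> over the residue field.\<close>

fun indep_mod :: "'b set \<Rightarrow> 'b set \<Rightarrow> 'b list \<Rightarrow> bool" where
  "indep_mod N U [] \<longleftrightarrow> True"
| "indep_mod N U (u # us) \<longleftrightarrow> u \<notin> submodule hull U + N \<and> indep_mod N (insert u U) us"

lemma replacement: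
  assumes "finite G" and "K = submodule hull (U \<union> G)" and "set us \<subseteq> K"
    and "indep_mod (rad K) U us"
  shows "\<exists>G'\<subseteq>G. length us + card G' \<le> card G \<and> K = submodule hull (U \<union> set us \<union> G')"
  using assms
proof (induction us arbitrary: U G)
  case Nil
  then show ?case by auto
next
  case (Cons u us)
  have "G \<subseteq> K" using Cons.prems(2) hull_subset[of "U \<union> G"] by blast
  with Cons.prems obtain g where g: "g \<in> G"
    and K: "K = submodule hull (insert u U \<union> (G - {g}))"
    using exchange[of G K u U] by auto
  obtain G' where G': "G' \<subseteq> G - {g}" "length us + card G' \<le> card (G - {g})"
    and K': "K = submodule hull (insert u U \<union> set us \<union> G')"
    using Cons.IH[of "G - {g}" "insert u U"] Cons.prems K by auto
  have "card (G - {g}) + 1 = card G"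
    using card_Suc_Diff1[OF Cons.prems(1) g] by simp
  then show ?case using G' K' by (intro exI[of _ G']) auto
qed

corollary indep_mod_generates:
  assumes "finite G" and "K = submodule hull G" and "card G \<le> length us"
    and "set us \<subseteq> K" and "indep_mod (rad K) {} us"
  shows "K = submodule hull (set us)"
proof -
  obtain G' where G': "G' \<subseteq> G" "length us + card G' \<le> card G"
    and K: "K = submodule hull ({} \<union> set us \<union> G')"
    using replacement[of G K "{}" us] assms by auto
  have "finite G'" using G'(1) assms(1) by (rule finite_subset)
  moreover have "card G' = 0" using G'(2) assms(3) by simp
  ultimately have "G' = {}" by simp
  then show ?thesis using K by simp
qed

section \<open>Products of submodules\<close>

lemma independent_lines_meet_in_rad:
  assumes p: "p \<in> K" "p \<notin> p' *o A + rad K"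
    and q: "q \<in> p' *o A + rad K" "q \<in> p *o A + rad K"
  shows "q \<in> rad K"
proof (rule ccontr)
  assume q_rad: "q \<notin> rad K"
  obtain b w where b: "b \<in> A" and w: "w \<in> rad K" and qbw: "q = p * b + w"
    using q(2) by (auto elim!: set_plus_elim simp: elt_set_times_def)
  have "b \<notin> n"
  proof
    assume "b \<in> n"
    then have "p * b \<in> rad K" using mem_rad[of b p K] p(1) by (simp add: mult.commute)
    then show False using q_rad qbw submodule_add[OF submodule_hull _ w] by auto
  qed
  then have "b \<noteq> 0" by auto
  obtain c v where c: "c \<in> A" and v: "v \<in> rad K" and qcv: "q = p' * c + v"
    using q(1) by (auto elim!: set_plus_elim simp: elt_set_times_def)
  have "p * b = p' * c + (v - w)" using qbw qcv by (simp add: algebra_simps)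
  then have "p = (p' * c + (v - w)) / b" using \<open>b \<noteq> 0\<close> by (simp add: eq_divide_eq)
  also have "\<dots> = p' * (inverse b * c) + inverse b * (v - w)"
    by (simp add: divide_inverse algebra_simps)
  finally have "p = p' * (inverse b * c) + inverse b * (v - w)" .
  moreover have "p' * (inverse b * c) + inverse b * (v - w) \<in> p' *o A + rad K"
    using inverse_mem[OF b \<open>b \<notin> n\<close>] c v w
    by (intro set_plus_intro set_times_intro2 mult_mem submodule_mult[OF submodule_hull]
        submodule_diff[OF submodule_hull])
  ultimately show False using p(2) by simp
qed

lemma product_submodule_eq:
  assumes K: "K = submodule hull (I * J)" and "i \<in> I" "j \<in> J" "x \<in> I"
    and "K \<subseteq> (i * j) *o A + x *o J"
  shows "K = (i * j) *o A + x *o J"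
proof
  have "(i * j) *o A \<subseteq> K"
    using submodule_mult[OF submodule_hull _ hull_inc[OF set_times_intro[OF \<open>i \<in> I\<close> \<open>j \<in> J\<close>]]]
    unfolding K by (auto simp: elt_set_times_def mult.commute)
  moreover have "x *o J \<subseteq> K"
    unfolding K using \<open>x \<in> I\<close> by (auto simp: elt_set_times_def intro: hull_inc)
  ultimately show "(i * j) *o A + x *o J \<subseteq> K"
    unfolding K by (rule set_plus_subset_submodule[OF submodule_hull])
qed (fact assms(5))

lemma cyclic_mod_multiple_if_indep:
  assumes I: "submodule I" and J: "submodule J" and K: "K = submodule hull (I * J)"
    and G: "finite G" "card G \<le> 3" "K = submodule hull G"
    and x: "x \<in> I" and j: "j1 \<in> J" "j2 \<in> J" and indep: "indep_mod (rad K) {} [x * j1, x * j2]"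
  shows "\<exists>i\<in>I. \<exists>j\<in>J. K = (i * j) *o A + x *o J"
proof -
  let ?T = "x *o J"
  have T: "submodule ?T" by (rule submodule_elt_times[OF J])
  show ?thesis
  proof (cases "I * J \<subseteq> ?T + rad K")
    case True
    \<comment> \<open>Then \<open>K = x J\<close>, and the product \<open>0 * 0\<close> serves as the extra generator.\<close>
    then have "K \<subseteq> ?T + rad K"
      unfolding K using submodule_set_plus[OF T submodule_hull] by (rule hull_minimal)
    then have "K \<subseteq> ?T" using nakayama[OF G(1) T, folded G(3)] by blast
    also have "\<dots> \<subseteq> (0 * 0) *o A + ?T" by (rule subset_elt_times_plus)
    finally show ?thesis
      using product_submodule_eq[OF K _ _ x] submodule_zero[OF I] submodule_zero[OF J] by blast
  next
    case False
    then obtain i j where ij: "i \<in> I" "j \<in> J" "i * j \<notin> ?T + rad K"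
      by (auto elim!: set_times_elim)
    have "submodule hull {x * j2, x * j1} \<subseteq> ?T"
      using j T by (intro hull_minimal) auto
    then have "i * j \<notin> submodule hull {x * j2, x * j1} + rad K"
      using ij(3) set_plus_mono2[OF _ order_refl] by blast
    then have indep3: "indep_mod (rad K) {} [x * j1, x * j2, i * j]" using indep by simp
    have "set [x * j1, x * j2, i * j] \<subseteq> K"
      unfolding K using x j ij by (auto intro: hull_inc)
    from indep_mod_generates[OF G(1) G(3) _ this indep3] G(2)
    have "K = submodule hull {x * j1, x * j2, i * j}" by simp
    also have "\<dots> \<subseteq> (i * j) *o A + ?T"
    proof (rule hull_minimal)
      show "submodule ((i * j) *o A + ?T)"
        by (intro submodule_set_plus submodule_elt_times submodule_ring T)
      have "(i * j) * 0 + x * j1 \<in> (i * j) *o A + ?T" "(i * j) * 0 + x * j2 \<in> (i * j) *o A + ?T"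
        "(i * j) * 1 + x * 0 \<in> (i * j) *o A + ?T"
        using j submodule_zero[OF J] by (intro set_plus_intro set_times_intro2 zero_mem one_mem; simp)+
      then show "{x * j1, x * j2, i * j} \<subseteq> (i * j) *o A + ?T" by simp
    qed
    finally show ?thesis using product_submodule_eq[OF K ij(1,2) x] ij by blast
  qed
qed

lemma cross_product_in_rad:
  assumes K: "K = submodule hull (I * J)"
    and I_rank: "\<And>x j1 j2. x \<in> I \<Longrightarrow> j1 \<in> J \<Longrightarrow> j2 \<in> J \<Longrightarrow> \<not> indep_mod (rad K) {} [x * j1, x * j2]"
    and J_rank: "\<And>y i1 i2. y \<in> J \<Longrightarrow> i1 \<in> I \<Longrightarrow> i2 \<in> I \<Longrightarrow> \<not> indep_mod (rad K) {} [y * i1, y * i2]"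
    and ij: "i1 \<in> I" "j1 \<in> J" "i2 \<in> I" "j2 \<in> J"
    and p1: "i1 * j1 \<notin> rad K" and p2: "i2 * j2 \<notin> (i1 * j1) *o A + rad K"
  shows "i1 * j2 \<in> rad K"
proof (rule independent_lines_meet_in_rad[OF _ p2])
  show "i2 * j2 \<in> K" unfolding K using ij by (intro hull_inc set_times_intro)
  show "i1 * j2 \<in> (i1 * j1) *o A + rad K"
    using I_rank[OF ij(1,2,4)] p1 by simp
  have "j2 * i2 \<notin> rad K" using p2 subset_elt_times_plus[of "rad K"] by (auto simp: mult.commute)
  then show "i1 * j2 \<in> (i2 * j2) *o A + rad K"
    using J_rank[OF ij(4,3,1)] by (simp add: mult.commute)
qed

text \<open>Polarisation: if \<open>i\<^sub>2 j\<^sub>2\<close> were off the line through \<open>i\<^sub>1 j\<^sub>1\<close>, both cross products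
  would lie in \<open>rad K\<close>, and then \<open>(i\<^sub>1 + i\<^sub>2) j\<^sub>1\<close>, \<open>(i\<^sub>1 + i\<^sub>2) j\<^sub>2\<close> would be independent.\<close>

lemma product_in_line_mod_rad:
  assumes I: "submodule I" and K: "K = submodule hull (I * J)"
    and I_rank: "\<And>x j1 j2. x \<in> I \<Longrightarrow> j1 \<in> J \<Longrightarrow> j2 \<in> J \<Longrightarrow> \<not> indep_mod (rad K) {} [x * j1, x * j2]"
    and J_rank: "\<And>y i1 i2. y \<in> J \<Longrightarrow> i1 \<in> I \<Longrightarrow> i2 \<in> I \<Longrightarrow> \<not> indep_mod (rad K) {} [y * i1, y * i2]"
    and ij1: "i1 \<in> I" "j1 \<in> J" "i1 * j1 \<notin> rad K" and ij2: "i2 \<in> I" "j2 \<in> J"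
  shows "i2 * j2 \<in> (i1 * j1) *o A + rad K"
proof (rule ccontr)
  assume p2: "i2 * j2 \<notin> (i1 * j1) *o A + rad K"
  have rad: "submodule (rad K)" by simp
  have i1j2: "i1 * j2 \<in> rad K"
    using cross_product_in_rad[OF K I_rank J_rank ij1(1,2) ij2 ij1(3) p2] .
  have "K = submodule hull (J * I)" using K by (simp only: mult.commute[of I J])
  from cross_product_in_rad[OF this J_rank I_rank ij1(2,1) ij2(2,1)] ij1(3) p2
  have i2j1: "i2 * j1 \<in> rad K" by (simp add: mult.commute)
  have x: "i1 + i2 \<in> I" using submodule_add[OF I ij1(1) ij2(1)] .
  have "(i1 + i2) * j1 \<notin> rad K"
  proof
    assume "(i1 + i2) * j1 \<in> rad K"
    then have "(i1 + i2) * j1 - i2 * j1 \<in> rad K" using submodule_diff[OF rad _ i2j1] by blast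
    then show False using ij1(3) by (simp add: algebra_simps)
  qed
  then have "(i1 + i2) * j2 \<in> ((i1 + i2) * j1) *o A + rad K"
    using I_rank[OF x ij1(2) ij2(2)] by simp
  then obtain r w where r: "r \<in> A" and w: "w \<in> rad K"
    and rw: "(i1 + i2) * j2 = (i1 + i2) * j1 * r + w"
    by (auto elim!: set_plus_elim simp: elt_set_times_def)
  have "i2 * j2 = (i1 * j1) * r + (r * (i2 * j1) + w - i1 * j2)"
    using rw by (simp add: algebra_simps)
  moreover have "r * (i2 * j1) + w - i1 * j2 \<in> rad K"
    by (intro submodule_diff[OF rad] submodule_add[OF rad] submodule_mult[OF rad] r w i2j1 i1j2)
  ultimately have "i2 * j2 \<in> (i1 * j1) *o A + rad K"
    using r by (simp add: set_plus_intro set_times_intro2)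
  then show False using p2 by blast
qed

lemma products_in_line_mod_rad:
  assumes I: "submodule I" and J: "submodule J" and K: "K = submodule hull (I * J)"
    and I_rank: "\<And>x j1 j2. x \<in> I \<Longrightarrow> j1 \<in> J \<Longrightarrow> j2 \<in> J \<Longrightarrow> \<not> indep_mod (rad K) {} [x * j1, x * j2]"
    and J_rank: "\<And>y i1 i2. y \<in> J \<Longrightarrow> i1 \<in> I \<Longrightarrow> i2 \<in> I \<Longrightarrow> \<not> indep_mod (rad K) {} [y * i1, y * i2]"
  shows "\<exists>i\<in>I. \<exists>j\<in>J. I * J \<subseteq> (i * j) *o A + rad K"
proof (cases "I * J \<subseteq> rad K")
  case True
  then show ?thesis
    using subset_elt_times_plus[of "rad K" "0 * 0"] submodule_zero[OF I] submodule_zero[OF J]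
    by blast
next
  case False
  then obtain i1 j1 where ij1: "i1 \<in> I" "j1 \<in> J" "i1 * j1 \<notin> rad K"
    by (auto elim!: set_times_elim)
  have "I * J \<subseteq> (i1 * j1) *o A + rad K"
    using product_in_line_mod_rad[OF I K I_rank J_rank ij1] by (auto elim!: set_times_elim)
  then show ?thesis using ij1 by blast
qed

theorem product_cyclic_mod_multiple:
  assumes I: "submodule I" and J: "submodule J" and K: "K = submodule hull (I * J)"
    and G: "finite G" "card G \<le> 3" "K = submodule hull G" and I0: "I \<noteq> {0}"
  shows "(\<exists>x\<in>I. x \<noteq> 0 \<and> (\<exists>i\<in>I. \<exists>j\<in>J. K = (i * j) *o A + x *o J))
    \<or> (\<exists>y\<in>J. y \<noteq> 0 \<and> (\<exists>i\<in>I. \<exists>j\<in>J. K = (i * j) *o A + y *o I))"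
proof -
  have rad0: "0 \<in> rad K" by (simp add: submodule_zero)
  consider (I_indep) x j1 j2 where "x \<in> I" "j1 \<in> J" "j2 \<in> J" "indep_mod (rad K) {} [x * j1, x * j2]"
    | (J_indep) y i1 i2 where "y \<in> J" "i1 \<in> I" "i2 \<in> I" "indep_mod (rad K) {} [y * i1, y * i2]"
    | (rank_one) "\<forall>x\<in>I. \<forall>j1\<in>J. \<forall>j2\<in>J. \<not> indep_mod (rad K) {} [x * j1, x * j2]"
      "\<forall>y\<in>J. \<forall>i1\<in>I. \<forall>i2\<in>I. \<not> indep_mod (rad K) {} [y * i1, y * i2]"
    by blast
  then show ?thesis
  proof cases
    case I_indep
    then have "x * j1 \<notin> rad K" by simp
    then have "x \<noteq> 0" using rad0 by (metis mult_zero_left)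
    then show ?thesis using cyclic_mod_multiple_if_indep[OF I J K G I_indep] I_indep(1) by blast
  next
    case J_indep
    have "K = submodule hull (J * I)" using K by (simp only: mult.commute[of I J])
    from cyclic_mod_multiple_if_indep[OF J I this G J_indep]
    obtain j i where ji: "j \<in> J" "i \<in> I" "K = (j * i) *o A + y *o I" by blast
    have "y * i1 \<notin> rad K" using J_indep(4) by simp
    then have "y \<noteq> 0" using rad0 by (metis mult_zero_left)
    moreover have "K = (i * j) *o A + y *o I" using ji(3) by (simp add: mult.commute)
    ultimately have "\<exists>y\<in>J. y \<noteq> 0 \<and> (\<exists>i\<in>I. \<exists>j\<in>J. K = (i * j) *o A + y *o I)"
      using ji(1,2) J_indep(1) by blast
    then show ?thesis by (rule disjI2)
  next
    case rank_one
    obtain i j where ij: "i \<in> I" "j \<in> J" "I * J \<subseteq> (i * j) *o A + rad K"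
      using products_in_line_mod_rad[OF I J K rank_one[rule_format]] by blast
    have L: "submodule ((i * j) *o A)" by (rule submodule_elt_times[OF submodule_ring])
    from ij(3) have "K \<subseteq> (i * j) *o A + rad K"
      unfolding K using submodule_set_plus[OF L submodule_hull] by (rule hull_minimal)
    then have "K \<subseteq> (i * j) *o A" using nakayama[OF G(1) L, folded G(3)] by blast
    obtain x where x: "x \<in> I" "x \<noteq> 0" using I0 submodule_zero[OF I] by blast
    have "0 \<in> x *o J" using set_times_intro2[OF submodule_zero[OF J], of x] by simp
    then have "(i * j) *o A \<subseteq> (i * j) *o A + x *o J"
      by (subst add.commute) (rule set_zero_plus2)
    with \<open>K \<subseteq> (i * j) *o A\<close> have "K \<subseteq> (i * j) *o A + x *o J" by (rule order_trans)
    then have "K = (i * j) *o A + x *o J" by (rule product_submodule_eq[OF K ij(1,2) x(1)])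
    then have "\<exists>x\<in>I. x \<noteq> 0 \<and> (\<exists>i\<in>I. \<exists>j\<in>J. K = (i * j) *o A + x *o J)"
      using x ij(1,2) by blast
    then show ?thesis by (rule disjI1)
  qed
qed

lemma multiplication_onto_quotient:
  assumes "submodule I" "i \<in> I" "w \<in> (i * j) *o A + x *o J"
  shows "\<exists>i'\<in>I. \<exists>z\<in>J. w - i' * j = x * z"
proof -
  obtain r z where "r \<in> A" "z \<in> J" "w = i * j * r + x * z"
    using assms(3) by (auto elim!: set_plus_elim simp: elt_set_times_def)
  moreover have "r * i \<in> I" using submodule_mult[OF assms(1) \<open>r \<in> A\<close> assms(2)] .
  ultimately show ?thesis by (intro bexI[of _ "r * i"] bexI[of _ z]) (simp_all add: algebra_simps)
qed

end

section \<open>Localisation at a prime ideal\<close>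

definition prime_ideal :: "'a::comm_ring_1 set \<Rightarrow> bool" where
  "prime_ideal p \<longleftrightarrow> is_ideal p \<and> 1 \<notin> p \<and> (\<forall>x y. x * y \<in> p \<longrightarrow> x \<in> p \<or> y \<in> p)"

lemma
  assumes "is_ideal I"
  shows is_ideal_zero: "0 \<in> I"
    and is_ideal_add: "a \<in> I \<Longrightarrow> b \<in> I \<Longrightarrow> a + b \<in> I"
    and is_ideal_mult: "a \<in> I \<Longrightarrow> r * a \<in> I"
  using assms unfolding is_ideal_def by auto

lemma is_ideal_plus_multiples:
  assumes m: "is_ideal m"
  shows "is_ideal {p + r * y | p r. p \<in> m}"
  unfolding is_ideal_def
proof (intro conjI ballI allI)
  show "0 \<in> {p + r * y | p r. p \<in> m}"
    using is_ideal_zero[OF m] by (intro CollectI exI[of _ 0]) simp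
next
  fix u v assume "u \<in> {p + r * y | p r. p \<in> m}" "v \<in> {p + r * y | p r. p \<in> m}"
  then obtain p r p' r' where "p \<in> m" "p' \<in> m" "u = p + r * y" "v = p' + r' * y" by blast
  then show "u + v \<in> {p + r * y | p r. p \<in> m}"
    using is_ideal_add[OF m] by (intro CollectI exI[of _ "p + p'"] exI[of _ "r + r'"])
      (simp add: algebra_simps)
next
  fix s u assume "u \<in> {p + r * y | p r. p \<in> m}"
  then obtain p r where "p \<in> m" "u = p + r * y" by blast
  then show "s * u \<in> {p + r * y | p r. p \<in> m}"
    using is_ideal_mult[OF m] by (intro CollectI exI[of _ "s * p"] exI[of _ "s * r"])
      (simp add: algebra_simps)
qed

lemma maximal_ideal_imp_prime_ideal:
  assumes "maximal_ideal m"
  shows "prime_ideal m"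
proof -
  have m: "is_ideal m" "m \<noteq> UNIV"
    and max: "\<And>K. is_ideal K \<Longrightarrow> m \<subseteq> K \<Longrightarrow> K = m \<or> K = UNIV"
    using assms unfolding maximal_ideal_def by auto
  have "1 \<notin> m"
  proof
    assume "1 \<in> m"
    then have "r \<in> m" for r using is_ideal_mult[OF m(1), of 1 r] by simp
    then show False using m(2) by blast
  qed
  moreover have "x \<in> m \<or> y \<in> m" if xy: "x * y \<in> m" for x y
  proof (rule disjCI)
    assume y: "y \<notin> m"
    define K where "K = {p + r * y | p r. p \<in> m}"
    have "m \<subseteq> K"
    proof
      fix p assume "p \<in> m"
      then show "p \<in> K" unfolding K_def by (intro CollectI exI[of _ p] exI[of _ 0]) simp
    qed
    moreover have "y \<in> K"
      unfolding K_def using is_ideal_zero[OF m(1)] by (intro CollectI exI[of _ 0] exI[of _ 1]) simp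
    ultimately have "K = UNIV"
      using max[OF is_ideal_plus_multiples[OF m(1)]] y unfolding K_def by blast
    then obtain p r where p: "p \<in> m" and one: "1 = p + r * y" unfolding K_def by blast
    have "x = x * (p + r * y)" unfolding one[symmetric] by simp
    also have "\<dots> = x * p + r * (x * y)" by (simp add: algebra_simps)
    also have "\<dots> \<in> m" by (intro is_ideal_add[OF m(1)] is_ideal_mult[OF m(1)] p xy)
    finally show "x \<in> m" .
  qed
  ultimately show ?thesis using m(1) unfolding prime_ideal_def by blast
qed

lemma is_ideal_span3: "is_ideal {r * a + s * b + t * c | r s t. True}"
  unfolding is_ideal_def
proof (intro conjI ballI allI)
  show "0 \<in> {r * a + s * b + t * c | r s t. True}" by (intro CollectI exI[of _ 0]) simp
next
  fix u v assume "u \<in> {r * a + s * b + t * c | r s t. True}" "v \<in> {r * a + s * b + t * c | r s t. True}"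
  then obtain r s t r' s' t' where "u = r * a + s * b + t * c" "v = r' * a + s' * b + t' * c"
    by blast
  then show "u + v \<in> {r * a + s * b + t * c | r s t. True}"
    by (intro CollectI exI[of _ "r + r'"] exI[of _ "s + s'"] exI[of _ "t + t'"])
      (simp add: algebra_simps)
next
  fix q u assume "u \<in> {r * a + s * b + t * c | r s t. True}"
  then obtain r s t where "u = r * a + s * b + t * c" by blast
  then show "q * u \<in> {r * a + s * b + t * c | r s t. True}"
    by (intro CollectI exI[of _ "q * r"] exI[of _ "q * s"] exI[of _ "q * t"])
      (simp add: algebra_simps)
qed

lemma is_ideal_ideal_prod:
  assumes I: "is_ideal I"
  shows "is_ideal (ideal_prod I J)"
  unfolding is_ideal_def
proof (intro conjI ballI allI)
  show "0 \<in> ideal_prod I J" unfolding ideal_prod_def by (rule CollectI, rule exI[of _ 0]) simp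
next
  fix u v assume "u \<in> ideal_prod I J" "v \<in> ideal_prod I J"
  then obtain n1 n2 :: nat and f1 g1 f2 g2 where u: "u = (\<Sum>k<n1. f1 k * g1 k)" "\<forall>k<n1. f1 k \<in> I \<and> g1 k \<in> J"
    and v: "v = (\<Sum>k<n2. f2 k * g2 k)" "\<forall>k<n2. f2 k \<in> I \<and> g2 k \<in> J"
    unfolding ideal_prod_def by blast
  define f where "f k = (if k < n1 then f1 k else f2 (k - n1))" for k
  define g where "g k = (if k < n1 then g1 k else g2 (k - n1))" for k
  have "(\<Sum>k<n1 + n2. f k * g k) = (\<Sum>k\<in>{0..<n1}. f k * g k) + (\<Sum>k\<in>{0 + n1..<n2 + n1}. f k * g k)"
    by (simp add: lessThan_atLeast0 sum.atLeastLessThan_concat add.commute)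
  also have "\<dots> = u + v"
    unfolding u v sum.shift_bounds_nat_ivl lessThan_atLeast0 by (simp add: f_def g_def)
  finally have "u + v = (\<Sum>k<n1 + n2. f k * g k)" ..
  moreover have "\<forall>k<n1 + n2. f k \<in> I \<and> g k \<in> J" using u(2) v(2) by (simp add: f_def g_def)
  ultimately show "u + v \<in> ideal_prod I J" unfolding ideal_prod_def by blast
next
  fix r u assume "u \<in> ideal_prod I J"
  then obtain n :: nat and f g where "u = (\<Sum>k<n. f k * g k)" "\<forall>k<n. f k \<in> I \<and> g k \<in> J"
    unfolding ideal_prod_def by blast
  moreover have "r * u = (\<Sum>k<n. (r * f k) * g k)"
    using calculation(1) by (simp add: sum_distrib_left mult.assoc)
  ultimately show "r * u \<in> ideal_prod I J"
    unfolding ideal_prod_def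
    by (intro CollectI exI[of _ n] exI[of _ "\<lambda>k. r * f k"] exI[of _ g])
      (simp add: is_ideal_mult[OF I])
qed

lemma Fract_in_localize: "a \<in> S \<Longrightarrow> s \<notin> m \<Longrightarrow> Fract a s \<in> localize m S"
  unfolding localize_def by blast

lemma elt_times_plus_eq:
  fixes p x :: "'a::{ab_semigroup_mult, plus}"
  shows "p *o C + x *o D = {r * p + x * z | r z. r \<in> C \<and> z \<in> D}"
  by (auto simp: set_plus_def elt_set_times_def mult.commute)

context
  fixes m :: "'a::idom set"
  assumes m: "prime_ideal m"
begin

lemma prime_ideal_compl_mult: "s \<notin> m \<Longrightarrow> t \<notin> m \<Longrightarrow> s * t \<notin> m"
  using m unfolding prime_ideal_def by blast

lemma nonzero_if_notin_prime_ideal: "s \<notin> m \<Longrightarrow> s \<noteq> 0"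
  using m unfolding prime_ideal_def is_ideal_def by blast

lemma one_notin_prime_ideal: "1 \<notin> m"
  using m unfolding prime_ideal_def by blast

lemma localize_zero: "is_ideal S \<Longrightarrow> 0 \<in> localize m S"
  unfolding localize_def Zero_fract_def using is_ideal_zero one_notin_prime_ideal by blast

lemma localize_add:
  assumes S: "is_ideal S" and "u \<in> localize m S" "v \<in> localize m S"
  shows "u + v \<in> localize m S"
proof -
  obtain a s b t where h: "a \<in> S" "s \<notin> m" "u = Fract a s" "b \<in> S" "t \<notin> m" "v = Fract b t"
    using assms(2,3) unfolding localize_def by blast
  have "u + v = Fract (t * a + s * b) (s * t)"
    using h nonzero_if_notin_prime_ideal by (simp add: algebra_simps)
  moreover have "t * a + s * b \<in> S" using is_ideal_add[OF S] is_ideal_mult[OF S] h by blast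
  ultimately show ?thesis using prime_ideal_compl_mult h unfolding localize_def by blast
qed

lemma localize_mult:
  assumes S: "is_ideal S" and "r \<in> localize m UNIV" "u \<in> localize m S"
  shows "r * u \<in> localize m S"
proof -
  obtain a s b t where h: "s \<notin> m" "r = Fract a s" "b \<in> S" "t \<notin> m" "u = Fract b t"
    using assms(2,3) unfolding localize_def by blast
  then have "r * u = Fract (a * b) (s * t)" by simp
  moreover have "a * b \<in> S" using is_ideal_mult[OF S] h by blast
  ultimately show ?thesis using prime_ideal_compl_mult h unfolding localize_def by blast
qed

lemma local_subring_localize: "local_subring (localize m UNIV) (localize m m)"
proof
  have UNIV: "is_ideal (UNIV :: 'a set)" unfolding is_ideal_def by simp
  have m_ideal: "is_ideal m" using m unfolding prime_ideal_def by blast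
  show "0 \<in> localize m UNIV" by (rule localize_zero[OF UNIV])
  show "1 \<in> localize m UNIV"
    unfolding localize_def One_fract_def using one_notin_prime_ideal by blast
  show "\<And>x y. x \<in> localize m UNIV \<Longrightarrow> y \<in> localize m UNIV \<Longrightarrow> x + y \<in> localize m UNIV"
    by (rule localize_add[OF UNIV])
  show "\<And>x y. x \<in> localize m UNIV \<Longrightarrow> y \<in> localize m UNIV \<Longrightarrow> x * y \<in> localize m UNIV"
    by (rule localize_mult[OF UNIV])
  show "- x \<in> localize m UNIV" if x: "x \<in> localize m UNIV" for x
  proof -
    obtain a s where "s \<notin> m" "x = Fract a s" using x unfolding localize_def by blast
    then show ?thesis by (simp add: Fract_in_localize)
  qed
  show "localize m m \<subseteq> localize m UNIV" unfolding localize_def by blast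
  show "0 \<in> localize m m" by (rule localize_zero[OF m_ideal])
  show "\<And>x y. x \<in> localize m m \<Longrightarrow> y \<in> localize m m \<Longrightarrow> x + y \<in> localize m m"
    by (rule localize_add[OF m_ideal])
  show "\<And>r x. r \<in> localize m UNIV \<Longrightarrow> x \<in> localize m m \<Longrightarrow> r * x \<in> localize m m"
    by (rule localize_mult[OF m_ideal])
  show "1 \<notin> localize m m"
  proof
    assume "1 \<in> localize m m"
    then obtain a s where "a \<in> m" "s \<notin> m" "Fract 1 1 = Fract a s"
      unfolding localize_def One_fract_def by blast
    then show False using nonzero_if_notin_prime_ideal by (auto simp: eq_fract)
  qed
  show "inverse x \<in> localize m UNIV" if x: "x \<in> localize m UNIV" "x \<notin> localize m m" for x
  proof -
    obtain a s where "s \<notin> m" "x = Fract a s" using x(1) unfolding localize_def by blast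
    moreover from this have "a \<notin> m" using x(2) unfolding localize_def by blast
    ultimately show ?thesis unfolding localize_def by auto
  qed
qed

interpretation Rm: local_subring "localize m UNIV" "localize m m"
  by (rule local_subring_localize)

lemma submodule_localize: "is_ideal S \<Longrightarrow> Rm.submodule (localize m S)"
  by (intro Rm.submoduleI localize_zero localize_add localize_mult)

lemma localize_ideal_prod_subset:
  "localize m (ideal_prod I J) \<subseteq> Rm.submodule hull (localize m I * localize m J)"
proof
  let ?H = "Rm.submodule hull (localize m I * localize m J)"
  have sum_in: "Fract (\<Sum>k<N. f k * g k) s \<in> ?H"
    if "\<forall>k<N. f k \<in> I \<and> g k \<in> J" and s: "s \<notin> m" for N :: nat and f g s
    using that(1)
  proof (induction N)
    case 0
    then show ?case using Rm.submodule_zero[OF Rm.submodule_hull] by (simp add: fract_collapse)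
  next
    case (Suc N)
    have "Fract (f N) s * Fract (g N) 1 \<in> ?H"
      using Suc.prems s one_notin_prime_ideal by (intro hull_inc set_times_intro Fract_in_localize) auto
    moreover have "Fract (\<Sum>k<N. f k * g k) s \<in> ?H" using Suc by simp
    moreover have "Fract (\<Sum>k<Suc N. f k * g k) s
        = Fract (\<Sum>k<N. f k * g k) s + Fract (f N) s * Fract (g N) 1"
      using nonzero_if_notin_prime_ideal[OF s] by (simp add: eq_fract algebra_simps)
    ultimately show ?case using Rm.submodule_add[OF Rm.submodule_hull] by simp
  qed
  fix w assume "w \<in> localize m (ideal_prod I J)"
  then obtain q s where q: "q \<in> ideal_prod I J" and s: "s \<notin> m" and w: "w = Fract q s"
    unfolding localize_def by blast
  from q obtain N :: nat and f g where "\<forall>k<N. f k \<in> I \<and> g k \<in> J" and "q = (\<Sum>k<N. f k * g k)"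
    unfolding ideal_prod_def by blast
  then show "w \<in> ?H" using sum_in[OF _ s] w by simp
qed

lemma products_subset_localize:
  "localize m I * localize m J \<subseteq> localize m (ideal_prod I J)"
proof
  fix w assume "w \<in> localize m I * localize m J"
  then obtain a s b t where h: "a \<in> I" "s \<notin> m" "b \<in> J" "t \<notin> m" "w = Fract (a * b) (s * t)"
    unfolding localize_def by (auto elim!: set_times_elim)
  have "a * b \<in> ideal_prod I J"
    unfolding ideal_prod_def using h
    by (intro CollectI exI[of _ 1] exI[of _ "\<lambda>_. a"] exI[of _ "\<lambda>_. b"]) simp
  moreover have "s * t \<notin> m" using prime_ideal_compl_mult h by blast
  ultimately show "w \<in> localize m (ideal_prod I J)" unfolding h(5) by (rule Fract_in_localize)
qed

lemma localize_ideal_prod: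
  assumes "is_ideal I"
  shows "localize m (ideal_prod I J) = Rm.submodule hull (localize m I * localize m J)"
proof (rule antisym)
  show "localize m (ideal_prod I J) \<subseteq> Rm.submodule hull (localize m I * localize m J)"
    by (rule localize_ideal_prod_subset)
  show "Rm.submodule hull (localize m I * localize m J) \<subseteq> localize m (ideal_prod I J)"
    using products_subset_localize submodule_localize[OF is_ideal_ideal_prod[OF assms]]
    by (rule hull_minimal)
qed

lemma localize_ne_zero:
  assumes "is_ideal I" and "I \<noteq> {0}"
  shows "localize m I \<noteq> {0}"
proof -
  obtain i where "i \<in> I" "i \<noteq> 0" using assms is_ideal_zero by blast
  then have "Fract i 1 \<in> localize m I" "Fract i 1 \<noteq> 0"
    using one_notin_prime_ideal by (simp_all add: Fract_in_localize eq_fract Zero_fract_def)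
  then show ?thesis by blast
qed

lemma localize_span3:
  "localize m {r * a + s * b + t * c | r s t. True}
    = Rm.submodule hull {Fract a 1, Fract b 1, Fract c 1}"
proof
  let ?H = "Rm.submodule hull {Fract a 1, Fract b 1, Fract c 1}"
  show "localize m {r * a + s * b + t * c | r s t. True} \<subseteq> ?H"
  proof
    fix w assume "w \<in> localize m {r * a + s * b + t * c | r s t. True}"
    then obtain q u where q: "q \<in> {r * a + s * b + t * c | r s t. True}" and u: "u \<notin> m"
      and "w = Fract q u"
      unfolding localize_def by blast
    moreover obtain r s t where "q = r * a + s * b + t * c" using q by blast
    ultimately have w: "w = Fract r u * Fract a 1 + Fract s u * Fract b 1 + Fract t u * Fract c 1"
      using nonzero_if_notin_prime_ideal[OF u] by (simp add: eq_fract algebra_simps)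
    have coeffs: "Fract r u \<in> localize m UNIV" "Fract s u \<in> localize m UNIV"
      "Fract t u \<in> localize m UNIV"
      using u by (simp_all add: Fract_in_localize)
    show "w \<in> ?H" unfolding w
      by (intro Rm.submodule_add[OF Rm.submodule_hull] Rm.submodule_mult[OF Rm.submodule_hull]
          coeffs hull_inc) simp_all
  qed
  have "a \<in> {r * a + s * b + t * c | r s t. True}" "b \<in> {r * a + s * b + t * c | r s t. True}"
    "c \<in> {r * a + s * b + t * c | r s t. True}"
    by (intro CollectI exI[of _ 1] exI[of _ 0]; simp)+
  then have "{Fract a 1, Fract b 1, Fract c 1} \<subseteq> localize m {r * a + s * b + t * c | r s t. True}"
    using one_notin_prime_ideal by (simp add: Fract_in_localize)
  then show "?H \<subseteq> localize m {r * a + s * b + t * c | r s t. True}"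
    using submodule_localize[OF is_ideal_span3] by (rule hull_minimal)
qed

end

theorem lemma4p9:
  fixes I J m :: "'a::idom set"
  assumes "is_ideal I" and "is_ideal J"
    and "I \<noteq> {0}" and "J \<noteq> {0}"
    and "generated_by_3 (ideal_prod I J)"
    and "maximal_ideal m"
  defines "Rm \<equiv> localize m UNIV"
    and "Im \<equiv> localize m I"
    and "Jm \<equiv> localize m J"
    and "IJm \<equiv> localize m (ideal_prod I J)"
  shows
    "((\<exists>x\<in>Im. x \<noteq> 0 \<and> (\<exists>i\<in>Im. \<exists>j\<in>Jm.
         IJm = {r * (i * j) + x * z | r z. r \<in> Rm \<and> z \<in> Jm}))
      \<or> (\<exists>y\<in>Jm. y \<noteq> 0 \<and> (\<exists>i\<in>Im. \<exists>j\<in>Jm.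
         IJm = {r * (i * j) + y * z | r z. r \<in> Rm \<and> z \<in> Im})))
     \<and> (\<forall>x\<in>Im. \<forall>i\<in>Im. \<forall>j\<in>Jm. x \<noteq> 0 \<and>
          IJm = {r * (i * j) + x * z | r z. r \<in> Rm \<and> z \<in> Jm} \<longrightarrow>
          (\<forall>w\<in>IJm. \<exists>i'\<in>Im. \<exists>z\<in>Jm. w - i' * j = x * z))
     \<and> (\<forall>y\<in>Jm. \<forall>i\<in>Im. \<forall>j\<in>Jm. y \<noteq> 0 \<and>
          IJm = {r * (i * j) + y * z | r z. r \<in> Rm \<and> z \<in> Im} \<longrightarrow>
          (\<forall>w\<in>IJm. \<exists>j'\<in>Jm. \<exists>z\<in>Im. w - i * j' = y * z))"
proof -
  have m: "prime_ideal m" using assms(6) by (rule maximal_ideal_imp_prime_ideal)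
  interpret Rm: local_subring Rm "localize m m"
    unfolding Rm_def by (rule local_subring_localize[OF m])
  have I: "Rm.submodule Im" and J: "Rm.submodule Jm"
    unfolding Rm_def Im_def Jm_def using submodule_localize[OF m] assms(1,2) by auto
  have prods: "IJm = Rm.submodule hull (Im * Jm)"
    unfolding IJm_def Im_def Jm_def Rm_def using localize_ideal_prod[OF m assms(1)] .
  obtain a b c where "ideal_prod I J = {r * a + s * b + t * c | r s t. True}"
    using assms(5) unfolding generated_by_3_def by blast
  then have gens: "IJm = Rm.submodule hull {Fract a 1, Fract b 1, Fract c 1}"
    unfolding IJm_def Rm_def using localize_span3[OF m] by simp
  have "card {Fract a 1, Fract b 1, Fract c 1} \<le> 3" by (simp add: card_insert_if)
  moreover have "Im \<noteq> {0}" unfolding Im_def using localize_ne_zero[OF m assms(1,3)] .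
  ultimately have "(\<exists>x\<in>Im. x \<noteq> 0 \<and> (\<exists>i\<in>Im. \<exists>j\<in>Jm. IJm = (i * j) *o Rm + x *o Jm))
      \<or> (\<exists>y\<in>Jm. y \<noteq> 0 \<and> (\<exists>i\<in>Im. \<exists>j\<in>Jm. IJm = (i * j) *o Rm + y *o Im))"
    using Rm.product_cyclic_mod_multiple[OF I J prods _ _ gens] by blast
  moreover have "\<forall>x\<in>Im. \<forall>i\<in>Im. \<forall>j\<in>Jm. x \<noteq> 0 \<and> IJm = (i * j) *o Rm + x *o Jm \<longrightarrow>
      (\<forall>w\<in>IJm. \<exists>i'\<in>Im. \<exists>z\<in>Jm. w - i' * j = x * z)"
    using Rm.multiplication_onto_quotient[OF I] by blast
  moreover have "\<forall>y\<in>Jm. \<forall>i\<in>Im. \<forall>j\<in>Jm. y \<noteq> 0 \<and> IJm = (i * j) *o Rm + y *o Im \<longrightarrow>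
      (\<forall>w\<in>IJm. \<exists>j'\<in>Jm. \<exists>z\<in>Im. w - i * j' = y * z)"
    using Rm.multiplication_onto_quotient[OF J] by (metis mult.commute)
  ultimately show ?thesis unfolding elt_times_plus_eq by (rule conjI[OF _ conjI])
qed

end
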